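(* Let $d=1$, let $A\subset[0,1]$ be a fat Cantor set, let $c=\lambda(A)^{-1}$ and $f^\dagger(x)=c\,\mathbf 1_A(x)$ for $x\in\mathbb{R}$. Then $f^\dagger$ is a probability density on $\mathbb{R}$ with finite second moment, and $$\inf_{g\in\mathcal M}\mathrm{KL}(f^\dagger\|g)=0,\qquad f^\dagger\notin\mathcal F_{\mathrm{Ent}},\qquad f^\dagger\notin\mathcal F_{\mathrm{CSSA}}.$$
   Context: $\lambda$ is Lebesgue measure. A fat Cantor set is a compact nowhere dense subset of $[0,1]$ with strictly positive Lebesgue measure. $\log_+t=\max\{\log t,0\}$ for $t>0$, $\log_+0=0$. $\mathcal F_{\mathrm{Ent}}$ is the class of all continuous, strictly positive probability densities $f$ on $\mathbb{R}^d$ with $\int f\log_+f\,\mathrm{d}x<\infty$. Densities are w.r.t. Lebesgue measure; $F(A)=\int_Af\,\mathrm{d}x$; $\operatorname{supp}(f)=\{x:f(x)>0\}$. Comparison cubes are closed axis-aligned cubes (closed intervals when $d=1$); partition cubes may be half-open so as to be disjoint. "A cube of side $r$ with a vertex at $y$" means a closed axis-aligned cube of side length $r$ having $y$ as one of its vertices. A family of cubes of common side length is adjacent if they have pairwise disjoint interiors and the union of their closures is connected. Definition ($\mathcal F_{\mathrm{FSSA}}$): a density $f$ on $\mathbb{R}^d$ belongs to $\mathcal F_{\mathrm{FSSA}}$ if there exist, for each $m\ge1$, a partition $\operatorname{supp}(f)=A^{(m)}_0\sqcup A^{(m)}_1\sqcup\cdots\sqcup A^{(m)}_m$ in which $A^{(m)}_1,\dots,A^{(m)}_m$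 are adjacent cubes of common side length $h_m>0$ and $A^{(m)}_0$ is the remainder, such that: (i) $f$ is continuous on $\operatorname{supp}(f)$ except on a set of $F$-measure zero; (ii) there exist $r>0$ and, for every $y\in\operatorname{supp}(f)$, a comparison cube $C(r,y)$ of side length $r$ containing $y$, such that $D_r(y)=\log\big(f(y)/\inf_{z\in C(r,y)}f(z)\big)$ is measurable on $\operatorname{supp}(f)$ and $\int_{\operatorname{supp}(f)}D_r\,\mathrm{d}F<\infty$; (iii) there exists $M\in\mathbb N$ such that for every $m\ge M$: (a) if $y\in A^{(m)}_0$ then $C(r,y)\cap A^{(m)}_0$ contains a cube of side $r/2$ with a vertex at $y$; (b) if $y\in\operatorname{supp}(f)\setminus A^{(m)}_0$ then $C(r,y)\cap(\operatorname{supp}(f)\setminus A^{(m)}_0)$ contains a cube of side $r/2$ with a vertex at $y$. Definition ($\mathcal F_{\mathrm{CSSA}}$): a density $f$ belongs to $\mathcal F_{\mathrm{CSSA}}$ if there exist a measurable partition $\operatorname{supp}(f)=\bigsqcup_{\ell\ge1}Y_\ell$ with $p_\ell=F(Y_\ell)$, and, for each $\ell$ with $p_\ell>0$, a scale $r_\ell>0$, comparison cubes $C_\ell(y)$ of side $r_\ell$ containing $y$ ($y\in Y_\ell$), and for every $m\ge1$ a partition $Y_\ell=A^{(m)}_{\ell,0}\sqcup\cdots\sqcup A^{(m)}_{\ell,m}$ with $A^{(m)}_{\ell,1},\dots,A^{(m)}_{\ell,m}$ adjacent cubes of common side $h_{\ell,m}>0$, such that for each $\ell$ with $p_\ell>0$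 the normalized restriction $f_\ell=f\mathbf 1_{Y_\ell}/p_\ell$ satisfies the definition of $\mathcal F_{\mathrm{FSSA}}$ with these witnesses (scale $r_\ell$, cubes $C_\ell(y)$, these partitions), and, with $F_\ell$ the law of density $f_\ell$ and $D_\ell(y)=\log\big(f_\ell(y)/\inf_{z\in C_\ell(y)}f_\ell(z)\big)$ for $y\in Y_\ell$, one has $\sum_{\ell:p_\ell>0}p_\ell\int_{Y_\ell}D_\ell\,\mathrm{d}F_\ell<\infty$ and $\sum_{\ell:p_\ell>0}p_\ell\log_+(1/r_\ell)<\infty$. $\mathrm{KL}(f\|g)=\int f\log(f/g)\,\mathrm{d}x\in[0,\infty]$. $\mathcal M$ denotes the class of all finite Gaussian mixture densities: $x\mapsto\sum_{j=1}^m\pi_j\varphi(x;\mu_j,\Sigma_j)$ with $m\in\mathbb N$, $\pi_j\ge0$, $\sum_j\pi_j=1$, $\Sigma_j\succ0$, $\varphi(\cdot;\mu,\Sigma)$ the $N(\mu,\Sigma)$ density. *)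

theory Defs
  imports "HOL-Probability.Probability"
begin

text \<open>Everything is specialised to dimension d = 1: densities are functions real => real,
  densities are taken w.r.t. Lebesgue measure, cubes are intervals.\<close>

definition is_density :: "(real \<Rightarrow> real) \<Rightarrow> bool" where
  "is_density f \<longleftrightarrow> f \<in> borel_measurable lebesgue \<and> (\<forall>x. 0 \<le> f x)
     \<and> (\<integral>\<^sup>+ x. ennreal (f x) \<partial>lebesgue) = 1"

definition supp :: "(real \<Rightarrow> real) \<Rightarrow> real set" where
  "supp f = {x. f x > 0}"

definition Fmeas :: "(real \<Rightarrow> real) \<Rightarrow> real set \<Rightarrow> ennreal" where
  "Fmeas f B = (\<integral>\<^sup>+ x. indicator B x * ennreal (f x) \<partial>lebesgue)"

definition fat_cantor :: "real set \<Rightarrow> bool" where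
  "fat_cantor A \<longleftrightarrow> compact A \<and> A \<subseteq> {0..1} \<and> interior (closure A) = {}
     \<and> emeasure lebesgue A > 0"

definition log_plus :: "real \<Rightarrow> real" where
  "log_plus t = (if t > 0 then max (ln t) 0 else 0)"

definition kl_pt :: "real \<Rightarrow> real \<Rightarrow> ereal" where
  "kl_pt a b = (if a = 0 then 0 else if b = 0 then \<infinity> else ereal (a * ln (a / b)))"

definition KL :: "(real \<Rightarrow> real) \<Rightarrow> (real \<Rightarrow> real) \<Rightarrow> ereal" where
  "KL f g = enn2ereal (\<integral>\<^sup>+ x. e2ennreal (kl_pt (f x) (g x)) \<partial>lebesgue)
          - enn2ereal (\<integral>\<^sup>+ x. e2ennreal (- kl_pt (f x) (g x)) \<partial>lebesgue)"

text \<open>Finite Gaussian mixtures in dimension 1 (covariance = variance sigma^2 > 0).\<close>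
definition gauss_mixtures :: "(real \<Rightarrow> real) set" where
  "gauss_mixtures = {g. \<exists>(m::nat) (w::nat \<Rightarrow> real) (\<mu>::nat \<Rightarrow> real) (\<sigma>::nat \<Rightarrow> real).
      m \<ge> 1 \<and> (\<forall>j<m. 0 \<le> w j \<and> 0 < \<sigma> j) \<and> (\<Sum>j<m. w j) = 1
      \<and> g = (\<lambda>x. \<Sum>j<m. w j * normal_density (\<mu> j) (\<sigma> j) x)}"

definition F_Ent :: "(real \<Rightarrow> real) set" where
  "F_Ent = {f. is_density f \<and> continuous_on UNIV f \<and> (\<forall>x. f x > 0)
      \<and> (\<integral>\<^sup>+ x. ennreal (f x * log_plus (f x)) \<partial>lebesgue) < \<infinity>}"

definition comp_cube :: "real \<Rightarrow> real set \<Rightarrow> bool" where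
  "comp_cube r Q \<longleftrightarrow> (\<exists>a. Q = {a..a+r})"

definition part_cube :: "real \<Rightarrow> real set \<Rightarrow> bool" where
  "part_cube h Q \<longleftrightarrow> (\<exists>a. Q = {a..a+h} \<or> Q = {a..<a+h} \<or> Q = {a<..a+h})"

definition vertex_cube :: "real \<Rightarrow> real \<Rightarrow> real set \<Rightarrow> bool" where
  "vertex_cube s y Q \<longleftrightarrow> Q = {y..y+s} \<or> Q = {y-s..y}"

definition adjacent_cubes :: "real \<Rightarrow> nat \<Rightarrow> (nat \<Rightarrow> real set) \<Rightarrow> bool" where
  "adjacent_cubes h m Q \<longleftrightarrow> (\<forall>i\<in>{1..m}. part_cube h (Q i))
     \<and> (\<forall>i\<in>{1..m}. \<forall>j\<in>{1..m}. i \<noteq> j \<longrightarrow> interior (Q i) \<inter> interior (Q j) = {})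
     \<and> connected (\<Union>i\<in>{1..m}. closure (Q i))"

definition Dfun :: "(real \<Rightarrow> real) \<Rightarrow> (real \<Rightarrow> real set) \<Rightarrow> real \<Rightarrow> ereal" where
  "Dfun f C y = (let i = Inf (f ` C y) in if i \<le> 0 then \<infinity> else ereal (ln (f y / i)))"

text \<open>Conditions of the definition of F_FSSA for f with witnesses r, C (comparison cubes) and
  A (A m i is the i-th piece of the m-th partition, i = 0..m).\<close>
definition fssa_conds :: "(real \<Rightarrow> real) \<Rightarrow> real \<Rightarrow> (real \<Rightarrow> real set) \<Rightarrow> (nat \<Rightarrow> nat \<Rightarrow> real set) \<Rightarrow> bool" where
  "fssa_conds f r C A \<longleftrightarrow>
     (\<forall>m\<ge>1. supp f = (\<Union>i\<le>m. A m i) \<and> disjoint_family_on (A m) {..m}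
        \<and> (\<exists>h>0. adjacent_cubes h m (A m)))
   \<and> (\<exists>N. N \<in> sets lebesgue \<and> Fmeas f N = 0
        \<and> (\<forall>y\<in>supp f - N. continuous (at y within supp f) f))
   \<and> r > 0
   \<and> (\<forall>y\<in>supp f. comp_cube r (C y) \<and> y \<in> C y)
   \<and> (\<lambda>y. if y \<in> supp f then Dfun f C y else 0) \<in> borel_measurable lebesgue
   \<and> (\<integral>\<^sup>+ y. indicator (supp f) y * ennreal (f y) * e2ennreal (Dfun f C y) \<partial>lebesgue) < \<infinity>
   \<and> (\<exists>M::nat. \<forall>m\<ge>M.
        (\<forall>y\<in>A m 0. \<exists>Q. vertex_cube (r/2) y Q \<and> Q \<subseteq> C y \<inter> A m 0)
      \<and> (\<forall>y\<in>supp f - A m 0. \<exists>Q. vertex_cube (r/2) y Q \<and> Q \<subseteq> C y \<inter> (supp f - A m 0)))"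

definition F_FSSA :: "(real \<Rightarrow> real) set" where
  "F_FSSA = {f. is_density f \<and> (\<exists>r C A. fssa_conds f r C A)}"

definition F_CSSA :: "(real \<Rightarrow> real) set" where
  "F_CSSA = {f. is_density f \<and>
     (\<exists>(Y::nat \<Rightarrow> real set) (r::nat \<Rightarrow> real) (C::nat \<Rightarrow> real \<Rightarrow> real set)
        (A::nat \<Rightarrow> nat \<Rightarrow> nat \<Rightarrow> real set).
       let p = (\<lambda>l. enn2real (Fmeas f (Y l)));
           fl = (\<lambda>l x. f x * indicator (Y l) x / p l)
       in (\<forall>l\<ge>1. Y l \<in> sets lebesgue)
        \<and> supp f = (\<Union>l\<in>{1..}. Y l) \<and> disjoint_family_on Y {1..}
        \<and> (\<forall>l\<ge>1. p l > 0 \<longrightarrow> is_density (fl l) \<and> fssa_conds (fl l) (r l) (C l) (A l))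
        \<and> (\<Sum>l. if l \<ge> 1 \<and> p l > 0 then ennreal (p l) *
              (\<integral>\<^sup>+ y. indicator (Y l) y * ennreal (fl l y) * e2ennreal (Dfun (fl l) (C l) y) \<partial>lebesgue)
            else 0) < \<infinity>
        \<and> (\<Sum>l. if l \<ge> 1 \<and> p l > 0 then ennreal (p l * log_plus (1 / r l)) else 0) < \<infinity>)}"

end

theory Submission
  imports Defs
begin

text \<open>
  The density \<open>f = 1\<^sub>A / \<lambda>(A)\<close> is bounded with bounded support, so it has finite second moment.
  It vanishes off \<open>[0,1]\<close>, so it is not strictly positive and hence not in \<open>F_Ent\<close>. Every
  density in \<open>F_CSSA\<close> has a support containing a nondegenerate interval (one of the adjacent cubes
  of a piece of positive mass), whereas \<open>A\<close> has empty interior.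

  For the Kullback-Leibler infimum, Gibbs' inequality gives \<open>KL(f\<parallel>g) \<ge> 0\<close>. Conversely, given
  \<open>\<delta> > 0\<close>, outer regularity yields a thickening \<open>W\<close> of \<open>A\<close> with \<open>\<lambda>(W) < (1 + \<delta>) \<lambda>(A)\<close>.
  Take the uniform mixture of normal densities of a small width \<open>\<sigma>\<close> centred at the \<open>N\<close> points of a
  much finer grid \<open>t\<int>\<close> lying near \<open>A\<close>. The grid cells lie in \<open>W\<close>, so \<open>N t < (1 + \<delta>) \<lambda>(A)\<close>; at
  each point of \<open>A\<close> the mixture is a Riemann sum of the normal density, almost all of whose mass it
  captures, divided by \<open>N t\<close>. Hence \<open>g \<ge> (1 - \<delta>) / ((1 + \<delta>) \<lambda>(A))\<close> on \<open>A\<close>, and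
  \<open>KL(f\<parallel>g) \<le> ln ((1 + \<delta>) / (1 - \<delta>))\<close>.
\<close>

section \<open>Riemann sums of antitone functions\<close>

lemma antimono_on_integrable_on:
  fixes f :: "real \<Rightarrow> real"
  assumes "antimono_on {0..} f" and "0 \<le> p"
  shows "f integrable_on {p..q}"
proof -
  have "mono_on {p..q} (\<lambda>x. - f x)"
    using assms by (auto simp: monotone_on_def)
  then have "(\<lambda>x. - (- f x)) integrable_on {p..q}"
    by (intro integrable_neg integrable_on_mono_on)
  then show ?thesis by simp
qed

lemma integral_le_riemann_sum_antimono:
  fixes f :: "real \<Rightarrow> real"
  assumes f: "antimono_on {0..} f" and t: "0 < t" and u: "0 \<le> u"
  shows "integral {u..u + real J * t} f \<le> (\<Sum>j<J. t * f (u + real j * t))"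
proof (induction J)
  case 0
  then show ?case by simp
next
  case (Suc J)
  define b where "b = u + real J * t"
  have b: "0 \<le> b"
    using t u by (simp add: b_def)
  have "integral {u..b + t} f = integral {u..b} f + integral {b..b + t} f"
    using t u b unfolding b_def
    by (intro Henstock_Kurzweil_Integration.integral_combine[symmetric] antimono_on_integrable_on[OF f])
       auto
  also have "integral {b..b + t} f \<le> integral {b..b + t} (\<lambda>_. f b)"
    using b f by (intro integral_le antimono_on_integrable_on[OF f]) (auto simp: monotone_on_def)
  also have "\<dots> = t * f b"
    using t by simp
  also have "b + t = u + real (Suc J) * t"
    by (simp add: b_def algebra_simps)
  finally show ?case
    using Suc.IH by (simp add: b_def)
qed

lemma riemann_sum_antimono_offset_ge:
  fixes f :: "real \<Rightarrow> real"
  assumes f: "antimono_on {0..} f" and nonneg: "\<And>x. 0 \<le> x \<Longrightarrow> 0 \<le> f x"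
    and t: "0 < t" and u: "0 \<le> u" "u \<le> t" and r: "t \<le> r"
  shows "\<exists>J. (\<forall>j<J. u + real j * t \<le> r)
           \<and> integral {0..r} f - t * f 0 \<le> (\<Sum>j<J. t * f (u + real j * t))"
proof -
  define J where "J = nat \<lfloor>(r - u) / t\<rfloor> + 1"
  have q: "0 \<le> (r - u) / t"
    using t u r by simp
  have J_le: "u + real j * t \<le> r" if "j < J" for j
  proof -
    have "real j \<le> (r - u) / t"
      using that q unfolding J_def by linarith
    then show ?thesis
      using t by (simp add: pos_le_divide_eq)
  qed
  have J_ge: "r \<le> u + real J * t"
  proof -
    have "(r - u) / t \<le> real J"
      using q unfolding J_def by linarith
    then show ?thesis
      using t by (simp add: pos_divide_le_eq algebra_simps)
  qed
  note intg = antimono_on_integrable_on[OF f]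
  have "integral {0..r} f = integral {0..u} f + integral {u..r} f"
    using u r by (intro Henstock_Kurzweil_Integration.integral_combine[symmetric] intg) auto
  also have "integral {0..u} f \<le> integral {0..u} (\<lambda>_. f 0)"
    using f by (intro integral_le intg) (auto simp: monotone_on_def)
  also have "\<dots> \<le> t * f 0"
    using u nonneg[of 0] by (simp add: mult_right_mono)
  also have "integral {u..r} f \<le> integral {u..u + real J * t} f"
  proof -
    have "integral {u..u + real J * t} f = integral {u..r} f + integral {r..u + real J * t} f"
      using J_ge u r by (intro Henstock_Kurzweil_Integration.integral_combine[symmetric] intg) auto
    moreover have "0 \<le> integral {r..u + real J * t} f"
      using u r nonneg by (intro integral_nonneg intg) auto
    ultimately show ?thesis by simp
  qed
  also have "\<dots> \<le> (\<Sum>j<J. t * f (u + real j * t))"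
    by (rule integral_le_riemann_sum_antimono[OF f t u(1)])
  finally show ?thesis
    using J_le by (intro exI[of _ J]) auto
qed

lemma riemann_sum_grid_right_ge:
  fixes f :: "real \<Rightarrow> real"
  assumes f: "antimono_on {0..} f" and nonneg: "\<And>x. 0 \<le> x \<Longrightarrow> 0 \<le> f x"
    and t: "0 < t" and r: "t \<le> r"
  shows "\<exists>R. finite R \<and> R \<subseteq> {k::int. 0 < of_int k * t - x \<and> of_int k * t - x \<le> r}
           \<and> integral {0..r} f - t * f 0 \<le> t * (\<Sum>k\<in>R. f (of_int k * t - x))"
proof -
  \<comment> \<open>Start strictly to the right of \<open>x\<close>, so that the mirrored left half in
    \<open>riemann_sum_grid_ge\<close> does not overlap this one.\<close>
  define k0 where "k0 = \<lfloor>x / t\<rfloor> + 1"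
  define u where "u = of_int k0 * t - x"
  have "x / t < of_int k0" "of_int k0 \<le> x / t + 1"
    unfolding k0_def by linarith+
  then have u: "0 < u" "u \<le> t"
    using t by (auto simp: u_def field_simps)
  obtain J where J: "\<forall>j<J. u + real j * t \<le> r"
    and le: "integral {0..r} f - t * f 0 \<le> (\<Sum>j<J. t * f (u + real j * t))"
    using riemann_sum_antimono_offset_ge[OF f nonneg t _ u(2) r] u(1) by auto
  define R where "R = (\<lambda>j. k0 + int j) ` {..<J}"
  have shift: "(of_int k0 + real j) * t - x = u + real j * t" for j
    by (simp add: u_def algebra_simps)
  have "(\<Sum>k\<in>R. f (of_int k * t - x)) = (\<Sum>j<J. f (u + real j * t))"
    unfolding R_def by (subst sum.reindex) (auto simp: inj_on_def shift)
  moreover have "R \<subseteq> {k. 0 < of_int k * t - x \<and> of_int k * t - x \<le> r}"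
  proof
    fix k assume "k \<in> R"
    then obtain j where j: "j < J" "k = k0 + int j"
      by (auto simp: R_def)
    then have e: "of_int k * t - x = u + real j * t"
      using shift by simp
    have "0 < u + real j * t"
      using u t by (simp add: add_pos_nonneg)
    then show "k \<in> {k. 0 < of_int k * t - x \<and> of_int k * t - x \<le> r}"
      unfolding mem_Collect_eq e using J j by simp
  qed
  ultimately show ?thesis
    using le by (intro exI[of _ R]) (auto simp: R_def sum_distrib_left)
qed

lemma riemann_sum_grid_ge:
  fixes f :: "real \<Rightarrow> real"
  assumes f: "antimono_on {0..} f" and nonneg: "\<And>x. 0 \<le> f x" and even: "\<And>x. f (- x) = f x"
    and t: "0 < t" and r: "t \<le> r"
    and G: "\<And>k::int. \<bar>of_int k * t - x\<bar> \<le> r \<Longrightarrow> k \<in> G" and fin: "finite G"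
  shows "2 * (integral {0..r} f - t * f 0) \<le> t * (\<Sum>k\<in>G. f (x - of_int k * t))"
proof -
  obtain R where R: "finite R" "R \<subseteq> {k::int. 0 < of_int k * t - x \<and> of_int k * t - x \<le> r}"
    and R_le: "integral {0..r} f - t * f 0 \<le> t * (\<Sum>k\<in>R. f (of_int k * t - x))"
    using riemann_sum_grid_right_ge[OF f nonneg t r] by blast
  obtain R' where R': "finite R'" "R' \<subseteq> {k::int. 0 < of_int k * t + x \<and> of_int k * t + x \<le> r}"
    and R'_le: "integral {0..r} f - t * f 0 \<le> t * (\<Sum>k\<in>R'. f (of_int k * t + x))"
    using riemann_sum_grid_right_ge[OF f nonneg t r, of "- x"] by auto
  define L where "L = uminus ` R'"
  have sum_R: "(\<Sum>k\<in>R. f (of_int k * t - x)) = (\<Sum>k\<in>R. f (x - of_int k * t))"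
    by (intro sum.cong refl) (metis even minus_diff_eq)
  have sum_L: "(\<Sum>k\<in>R'. f (of_int k * t + x)) = (\<Sum>k\<in>L. f (x - of_int k * t))"
    unfolding L_def by (subst sum.reindex) (auto simp: add.commute)
  have "R \<inter> L = {}" "R \<union> L \<subseteq> G" "finite L"
    using R R' G by (force simp: L_def)+
  then have "(\<Sum>k\<in>R. f (x - of_int k * t)) + (\<Sum>k\<in>L. f (x - of_int k * t))
      \<le> (\<Sum>k\<in>G. f (x - of_int k * t))"
    using R(1) fin nonneg by (simp add: sum.union_disjoint[symmetric] sum_mono2)
  then have "t * (\<Sum>k\<in>R. f (x - of_int k * t)) + t * (\<Sum>k\<in>L. f (x - of_int k * t))
      \<le> t * (\<Sum>k\<in>G. f (x - of_int k * t))"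
    using t by (simp add: distrib_left[symmetric])
  then show ?thesis
    using R_le R'_le sum_R sum_L by simp
qed

section \<open>Normal densities and their mixtures\<close>

lemma normal_density_shift: "normal_density \<mu> \<sigma> x = normal_density 0 \<sigma> (x - \<mu>)"
  by (simp add: normal_density_def)

lemma normal_density_zero_minus: "normal_density 0 \<sigma> (- x) = normal_density 0 \<sigma> x"
  by (simp add: normal_density_def)

lemma antimono_on_normal_density_zero: "antimono_on {0..} (normal_density 0 \<sigma>)"
  unfolding monotone_on_def normal_density_def
  by (auto intro!: mult_left_mono divide_right_mono power_mono)

lemma normal_density_zero_at_zero_le:
  assumes "0 < \<sigma>"
  shows "\<sigma> * normal_density 0 \<sigma> 0 \<le> 1 / 2"
proof -
  have "sqrt 4 \<le> sqrt (2 * pi)"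
    using pi_gt3 by (intro real_sqrt_le_mono) simp
  moreover have "sqrt (2 * pi * \<sigma>\<^sup>2) = sqrt (2 * pi) * \<sigma>"
    using assms by (simp add: real_sqrt_mult)
  ultimately show ?thesis
    using assms by (simp add: normal_density_def field_simps)
qed

lemma normal_density_half_mass_ge:
  assumes s: "0 < \<sigma>" and r: "0 < r"
  shows "1 - \<sigma>\<^sup>2 / r\<^sup>2 \<le> 2 * integral {0..r} (normal_density 0 \<sigma>)"
proof -
  let ?f = "normal_density 0 \<sigma>"
  have moment: "integrable lborel (\<lambda>u. ?f u * u\<^sup>2)"
    using integrable_normal_moment[OF s, of 0 2] by simp
  have variance: "(\<integral>u. ?f u * u\<^sup>2 \<partial>lborel) = \<sigma>\<^sup>2"
    using integral_normal_moment_even[OF s, of 0 1] by (simp add: power2_eq_square)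
  have window: "integrable lborel (\<lambda>u. ?f u * indicator {-r..r} u)"
    by (intro integrable_real_mult_indicator integrable_normal_density[OF s]) auto
  have "1 = (\<integral>u. ?f u \<partial>lborel)"
    using s by simp
  also have "\<dots> \<le> (\<integral>u. ?f u * indicator {-r..r} u + ?f u * u\<^sup>2 / r\<^sup>2 \<partial>lborel)"
  proof (intro integral_mono)
    fix u
    show "?f u \<le> ?f u * indicator {-r..r} u + ?f u * u\<^sup>2 / r\<^sup>2"
    proof (cases "u \<in> {-r..r}")
      case False
      then have "r\<^sup>2 \<le> u\<^sup>2"
        using r by (auto simp: abs_le_square_iff[symmetric])
      then have "?f u * 1 \<le> ?f u * (u\<^sup>2 / r\<^sup>2)"
        using r by (intro mult_left_mono) auto
      then show ?thesis
        using False by simp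
    qed simp
  qed (use moment window s in \<open>auto intro!: integrable_divide\<close>)
  also have "\<dots> = (\<integral>u. ?f u * indicator {-r..r} u \<partial>lborel) + \<sigma>\<^sup>2 / r\<^sup>2"
    using window moment variance by (subst Bochner_Integration.integral_add) auto
  also have "(\<integral>u. ?f u * indicator {-r..r} u \<partial>lborel) = integral {-r..r} ?f"
    using set_borel_integral_eq_integral(2)[of "{-r..r}" ?f] window
    by (simp add: set_integrable_def set_lebesgue_integral_def mult.commute)
  also have "integral {-r..r} ?f = integral {-r..0} ?f + integral {0..r} ?f"
    using r s unfolding normal_density_def
    by (intro Henstock_Kurzweil_Integration.integral_combine[symmetric] integrable_continuous_real
        continuous_intros) auto
  also have "integral {-r..0} ?f = integral {0..r} ?f"
    using Henstock_Kurzweil_Integration.integral_reflect_real[of r 0 ?f]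
    by (simp add: normal_density_zero_minus)
  finally show ?thesis
    by simp
qed

lemma normal_mixture_positive_density:
  fixes m :: nat
  assumes ws: "\<forall>j<m. 0 \<le> w j \<and> 0 < \<sigma> j" and w1: "(\<Sum>j<m. w j) = 1"
  shows "is_density (\<lambda>x. \<Sum>j<m. w j * normal_density (\<mu> j) (\<sigma> j) x)"
    and "0 < (\<Sum>j<m. w j * normal_density (\<mu> j) (\<sigma> j) x)"
proof -
  define g where "g x = (\<Sum>j<m. w j * normal_density (\<mu> j) (\<sigma> j) x)" for x
  have "\<exists>i<m. w i \<noteq> 0"
    using w1 by (metis lessThan_iff sum.neutral zero_neq_one)
  then obtain i where i: "i < m" "0 < w i"
    using ws by (auto simp: order_less_le)
  have pos: "0 < g y" for y
  proof -
    have "0 < w i * normal_density (\<mu> i) (\<sigma> i) y"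
      using i ws by (simp add: normal_density_pos)
    also have "\<dots> \<le> g y"
      unfolding g_def using i ws by (intro member_le_sum) simp_all
    finally show ?thesis .
  qed
  then show "0 < (\<Sum>j<m. w j * normal_density (\<mu> j) (\<sigma> j) x)"
    by (simp add: g_def)
  have mass: "(\<integral>\<^sup>+ x. ennreal (w j * normal_density (\<mu> j) (\<sigma> j) x) \<partial>lborel) = ennreal (w j)"
    if "j \<in> {..<m}" for j
  proof -
    have "(\<integral>\<^sup>+ x. ennreal (w j * normal_density (\<mu> j) (\<sigma> j) x) \<partial>lborel)
        = ennreal (\<integral>x. w j * normal_density (\<mu> j) (\<sigma> j) x \<partial>lborel)"
      using ws that by (intro nn_integral_eq_integral) (auto intro!: integrable_mult_right)
    then show ?thesis
      using ws that by simp
  qed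
  have "(\<integral>\<^sup>+ x. ennreal (g x) \<partial>lborel)
      = (\<integral>\<^sup>+ x. (\<Sum>j<m. ennreal (w j * normal_density (\<mu> j) (\<sigma> j) x)) \<partial>lborel)"
    unfolding g_def using ws by (intro nn_integral_cong sum_ennreal[symmetric]) auto
  also have "\<dots> = (\<Sum>j<m. ennreal (w j))"
    using mass by (simp add: nn_integral_sum)
  also have "\<dots> = 1"
    using ws w1 by (subst sum_ennreal) auto
  finally have "(\<integral>\<^sup>+ x. ennreal (g x) \<partial>lebesgue) = 1"
    by (simp add: nn_integral_completion)
  moreover have "g \<in> borel_measurable lebesgue"
    unfolding g_def by (intro measurable_completion borel_measurable_sum) simp
  ultimately have "is_density g"
    unfolding is_density_def using pos by (simp add: less_imp_le)
  then show "is_density (\<lambda>x. \<Sum>j<m. w j * normal_density (\<mu> j) (\<sigma> j) x)"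
    by (simp add: g_def[abs_def])
qed

lemma gauss_mixtures_positive_density:
  assumes "g \<in> gauss_mixtures"
  shows "is_density g" and "0 < g x"
  using assms by (auto simp: gauss_mixtures_def normal_mixture_positive_density)

lemma uniform_mixture_in_gauss_mixtures:
  assumes "finite K" "K \<noteq> {}" "0 < \<sigma>"
  shows "(\<lambda>x. (\<Sum>k\<in>K. normal_density (\<mu> k) \<sigma> x) / real (card K)) \<in> gauss_mixtures"
proof -
  obtain h where h: "bij_betw h {..<card K} K"
    using ex_bij_betw_nat_finite[OF assms(1)] by (auto simp: atLeast0LessThan)
  have "(\<Sum>k\<in>K. normal_density (\<mu> k) \<sigma> x) / real (card K)
      = (\<Sum>j<card K. 1 / real (card K) * normal_density (\<mu> (h j)) \<sigma> x)" for x
    by (simp add: sum.reindex_bij_betw[OF h, symmetric] sum_divide_distrib)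
  then show ?thesis
    unfolding gauss_mixtures_def using assms
    by (intro CollectI exI[of _ "card K"] exI[of _ "\<lambda>_. 1 / real (card K)"] exI[of _ "\<mu> \<circ> h"]
        exI[of _ "\<lambda>_. \<sigma>"]) (auto simp: Suc_le_eq card_gt_0_iff)
qed

section \<open>Kullback-Leibler divergence\<close>

text \<open>Gibbs' inequality, from the pointwise bound \<open>f ln (f/g) \<ge> f - g\<close>.\<close>
lemma KL_nonneg:
  assumes f: "is_density f" and g: "is_density g" and g_pos: "\<And>x. 0 < g x"
  shows "0 \<le> KL f g"
proof -
  note [measurable] = f[unfolded is_density_def, THEN conjunct1] g[unfolded is_density_def, THEN conjunct1]
  have f_nonneg: "0 \<le> f x" for x
    using f by (simp add: is_density_def)
  define K where "K x = (if f x = 0 then 0 else f x * ln (f x / g x))" for x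
  have [measurable]: "K \<in> borel_measurable lebesgue"
    unfolding K_def by measurable
  have kl: "kl_pt (f x) (g x) = ereal (K x)" for x
    using g_pos[of x] by (simp add: kl_pt_def K_def)
  have K_ge: "f x - g x \<le> K x" for x
  proof (cases "f x = 0")
    case False
    then have fx: "0 < f x"
      using f_nonneg[of x] by simp
    have "ln (g x / f x) \<le> g x / f x - 1"
      using fx g_pos[of x] by (intro ln_le_minus_one) simp
    then have "f x * (1 - g x / f x) \<le> f x * ln (f x / g x)"
      using fx g_pos[of x] by (intro mult_left_mono) (auto simp: ln_div)
    then show ?thesis
      using fx by (simp add: K_def right_diff_distrib)
  qed (use g_pos[of x] in \<open>simp add: K_def\<close>)
  have pointwise: "ennreal (- K x) + ennreal (f x) \<le> ennreal (K x) + ennreal (g x)" for x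
  proof (cases "0 \<le> K x")
    case True
    then have "ennreal (- K x) + ennreal (f x) \<le> ennreal (K x + g x)"
      using K_ge[of x] by (simp add: ennreal_neg ennreal_leI)
    then show ?thesis
      using True g_pos[of x] by (simp add: ennreal_plus)
  next
    case False
    then have "ennreal (- K x) + ennreal (f x) \<le> ennreal (g x)"
      using K_ge[of x] f_nonneg[of x] by (simp add: ennreal_plus[symmetric] ennreal_leI)
    then show ?thesis
      using False by (simp add: ennreal_neg)
  qed
  define P where "P = (\<integral>\<^sup>+ x. ennreal (K x) \<partial>lebesgue)"
  define N where "N = (\<integral>\<^sup>+ x. ennreal (- K x) \<partial>lebesgue)"
  have "N + 1 = (\<integral>\<^sup>+ x. ennreal (- K x) + ennreal (f x) \<partial>lebesgue)"
    using f unfolding N_def is_density_def by (subst nn_integral_add) auto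
  also have "\<dots> \<le> (\<integral>\<^sup>+ x. ennreal (K x) + ennreal (g x) \<partial>lebesgue)"
    by (intro nn_integral_mono pointwise)
  also have "\<dots> = P + 1"
    using g unfolding P_def is_density_def by (subst nn_integral_add) auto
  finally have "N \<le> P"
    by (simp add: ennreal_add_left_cancel_le add.commute)
  moreover have "KL f g = enn2ereal P - enn2ereal N"
    unfolding KL_def P_def N_def kl by simp
  ultimately show ?thesis
    by (simp add: ereal_diff_positive less_eq_ennreal.rep_eq)
qed

lemma KL_le_of_ln_ratio_le:
  assumes f: "is_density f" and \<epsilon>: "0 \<le> \<epsilon>"
    and ratio: "\<And>x. 0 < f x \<Longrightarrow> 0 < g x \<and> ln (f x / g x) \<le> \<epsilon>"
  shows "KL f g \<le> ereal \<epsilon>"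
proof -
  have pointwise: "e2ennreal (kl_pt (f x) (g x)) \<le> ennreal \<epsilon> * ennreal (f x)" for x
  proof (cases "f x = 0")
    case False
    then have fx: "0 < f x"
      using f by (simp add: is_density_def order_less_le)
    then have "e2ennreal (kl_pt (f x) (g x)) = ennreal (f x * ln (f x / g x))"
      using ratio[OF fx] by (simp add: kl_pt_def)
    also have "\<dots> \<le> ennreal (\<epsilon> * f x)"
      using fx ratio[OF fx] by (intro ennreal_leI) (simp add: mult.commute)
    finally show ?thesis
      using fx \<epsilon> by (simp add: ennreal_mult)
  qed (simp add: kl_pt_def)
  define P where "P = (\<integral>\<^sup>+ x. e2ennreal (kl_pt (f x) (g x)) \<partial>lebesgue)"
  have "P \<le> (\<integral>\<^sup>+ x. ennreal \<epsilon> * ennreal (f x) \<partial>lebesgue)"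
    unfolding P_def by (intro nn_integral_mono pointwise)
  also have "\<dots> = ennreal \<epsilon>"
    using f by (simp add: is_density_def nn_integral_cmult)
  finally have "P \<le> ennreal \<epsilon>" .
  have "KL f g \<le> enn2ereal P"
    unfolding KL_def P_def by (intro ereal_diff_le_self) simp
  also have "\<dots> \<le> ereal \<epsilon>"
    using \<open>P \<le> ennreal \<epsilon>\<close> \<epsilon> by (simp add: less_eq_ennreal.rep_eq enn2ereal_ennreal)
  finally show ?thesis .
qed

section \<open>Uniform densities on compact sets\<close>

lemma fat_cantorD:
  assumes "fat_cantor A"
  shows "compact A" "A \<subseteq> {0..1}" "interior A = {}" "0 < measure lborel A"
    and "measure lebesgue A = measure lborel A"
proof -
  show A: "compact A" "A \<subseteq> {0..1}" "interior A = {}"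
    using assms compact_imp_closed[of A] unfolding fat_cantor_def by (auto simp: closure_closed)
  then have "A \<in> sets borel"
    by (simp add: borel_compact)
  then show "measure lebesgue A = measure lborel A"
    by (simp add: measure_completion)
  have "0 < emeasure lborel A"
    using assms \<open>A \<in> sets borel\<close> by (simp add: fat_cantor_def emeasure_completion)
  then show "0 < measure lborel A"
    using emeasure_compact_finite[OF A(1)] by (simp add: emeasure_eq_ennreal_measure zero_less_measure_iff)
qed

lemma is_density_uniform:
  fixes A :: "real set"
  assumes A: "compact A" and pos: "0 < measure lborel A"
  shows "is_density (\<lambda>x. indicator A x / measure lborel A)"
proof -
  have "A \<in> sets borel"
    using A by (simp add: borel_compact)
  have eq: "emeasure lborel A = ennreal (measure lborel A)"
    using emeasure_compact_finite[OF A] by (intro emeasure_eq_ennreal_measure) simp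
  have "(\<integral>\<^sup>+ x. ennreal (indicator A x / measure lborel A) \<partial>lborel)
      = (\<integral>\<^sup>+ x. ennreal (1 / measure lborel A) * indicator A x \<partial>lborel)"
    by (intro nn_integral_cong) (auto simp: indicator_def)
  also have "\<dots> = 1"
    using \<open>A \<in> sets borel\<close> pos by (simp add: nn_integral_cmult_indicator eq ennreal_mult[symmetric])
  finally show ?thesis
    using \<open>A \<in> sets borel\<close> by (simp add: is_density_def nn_integral_completion measurable_completion)
qed

lemma second_moment_finite_if_bounded_support:
  assumes f: "is_density f" and R: "\<And>x. f x \<noteq> 0 \<Longrightarrow> \<bar>x\<bar> \<le> R"
  shows "(\<integral>\<^sup>+ x. ennreal (x\<^sup>2 * f x) \<partial>lebesgue) < \<infinity>"
proof -
  have "ennreal (x\<^sup>2 * f x) \<le> ennreal (R\<^sup>2) * ennreal (f x)" for x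
  proof (cases "f x = 0")
    case False
    then have "x\<^sup>2 \<le> R\<^sup>2"
      using R[of x] by (metis abs_ge_zero power2_abs power_mono)
    then show ?thesis
      using f by (simp add: is_density_def ennreal_mult[symmetric] mult_right_mono ennreal_leI)
  qed simp
  then have "(\<integral>\<^sup>+ x. ennreal (x\<^sup>2 * f x) \<partial>lebesgue)
      \<le> (\<integral>\<^sup>+ x. ennreal (R\<^sup>2) * ennreal (f x) \<partial>lebesgue)"
    by (intro nn_integral_mono)
  also have "\<dots> = ennreal (R\<^sup>2)"
    using f by (simp add: is_density_def nn_integral_cmult)
  also have "\<dots> < \<infinity>"
    by simp
  finally show ?thesis .
qed

section \<open>Approximation of uniform densities by Gaussian mixtures\<close>

lemma emeasure_infdist_le_less:
  fixes A :: "'a::euclidean_space set"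
  assumes A: "compact A" "A \<noteq> {}" and less: "emeasure lborel A < b"
  shows "\<exists>\<rho>>0. emeasure lborel {z. infdist z A \<le> \<rho>} < b"
proof -
  define S where "S n = {z. infdist z A \<le> 1 / Suc n}" for n
  have S_compact: "compact (S n)" for n
    unfolding S_def using A by (intro compact_infdist_le) auto
  have "decseq S"
  proof (rule decseq_SucI)
    fix n
    have "1 / real (Suc (Suc n)) \<le> 1 / real (Suc n)"
      by (simp add: frac_le)
    then show "S (Suc n) \<subseteq> S n"
      unfolding S_def by (auto intro: order_trans)
  qed
  then have "(INF n. emeasure lborel (S n)) = emeasure lborel (\<Inter>n. S n)"
    using S_compact emeasure_compact_finite[OF S_compact]
    by (intro INF_emeasure_decseq) (auto intro: borel_compact simp: less_top)
  also have "(\<Inter>n. S n) = A"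
  proof
    show "(\<Inter>n. S n) \<subseteq> A"
    proof
      fix z assume z: "z \<in> (\<Inter>n. S n)"
      have "infdist z A \<le> 0"
      proof (rule field_le_epsilon)
        fix e :: real assume "0 < e"
        then obtain n where "1 / Suc n < e"
          by (metis nat_approx_posE)
        moreover have "infdist z A \<le> 1 / Suc n"
          using z by (auto simp: S_def)
        ultimately show "infdist z A \<le> 0 + e"
          by simp
      qed
      then have "z \<in> closure A"
        using A by (simp add: in_closure_iff_infdist_zero infdist_nonneg antisym)
      then show "z \<in> A"
        using A by (simp add: compact_imp_closed closure_closed)
    qed
  qed (auto simp: S_def)
  finally obtain n where "emeasure lborel (S n) < b"
    using less by (metis INF_less_iff)
  then show ?thesis
    by (intro exI[of _ "1 / Suc n"]) (auto simp: S_def)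
qed

lemma finite_int_grid_in_bounded:
  fixes B :: "real set"
  assumes t: "0 < t" and "bounded B"
  shows "finite {k::int. of_int k * t \<in> B}"
proof -
  obtain R where R: "\<And>z. z \<in> B \<Longrightarrow> \<bar>z\<bar> \<le> R"
    using \<open>bounded B\<close> by (auto simp: bounded_real)
  have "{k::int. of_int k * t \<in> B} \<subseteq> {-\<lceil>R / t\<rceil>..\<lceil>R / t\<rceil>}"
  proof
    fix k assume "k \<in> {k::int. of_int k * t \<in> B}"
    then have "\<bar>of_int k * t\<bar> \<le> R"
      using R by blast
    then have "\<bar>of_int k\<bar> * t \<le> R"
      using t by (simp add: abs_mult)
    then have "\<bar>of_int k\<bar> \<le> R / t"
      using t by (simp add: pos_le_divide_eq)
    then show "k \<in> {-\<lceil>R / t\<rceil>..\<lceil>R / t\<rceil>}"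
      by (auto simp: abs_le_iff) linarith+
  qed
  then show ?thesis
    by (rule finite_subset) simp
qed

lemma card_grid_cells_le_emeasure:
  assumes t: "0 < t" and K: "finite K" and S: "S \<in> sets lborel"
    and cells: "\<And>k. k \<in> K \<Longrightarrow> {of_int k * t..<of_int k * t + t} \<subseteq> S"
  shows "ennreal (real (card K) * t) \<le> emeasure lborel S"
proof -
  define C where "C k = {of_int k * t..<of_int k * t + t}" for k :: int
  have disj: "disjoint_family_on C K"
    unfolding disjoint_family_on_def
  proof (intro ballI impI)
    fix k l :: int assume "k \<noteq> l"
    show "C k \<inter> C l = {}"
    proof (rule ccontr)
      assume "C k \<inter> C l \<noteq> {}"
      then have "of_int (k - l) * t < t" "of_int (l - k) * t < t"
        by (auto simp: C_def algebra_simps)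
      then show False
        using t \<open>k \<noteq> l\<close> by simp
    qed
  qed
  have "C ` K \<subseteq> sets lborel"
    by (auto simp: C_def)
  from sum_emeasure[OF this disj K]
  have "emeasure lborel (\<Union>k\<in>K. C k) = (\<Sum>k\<in>K. emeasure lborel (C k))"
    by simp
  also have "\<dots> = ennreal (real (card K) * t)"
    using t by (simp add: C_def ennreal_of_nat_eq_real_of_nat ennreal_mult)
  finally show ?thesis
    using cells S by (metis C_def UN_least emeasure_mono)
qed

text \<open>By Chebyshev, \<open>\<sigma> = r \<surd>\<delta>\<close> leaves normal mass at most \<open>\<delta>\<close> outside \<open>[-r, r]\<close>, and
  \<open>t = \<delta> \<sigma>\<close> makes the Riemann-sum error \<open>2 t \<phi>(0)\<close> at most \<open>\<delta>\<close>.\<close>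
lemma normal_grid_sum_ge:
  assumes \<delta>: "0 < \<delta>" "\<delta> \<le> 1" and r: "0 < r"
    and \<sigma>: "\<sigma> = r * sqrt \<delta>" and t: "t = \<delta> * \<sigma>"
    and G: "\<And>k::int. \<bar>of_int k * t - x\<bar> \<le> r \<Longrightarrow> k \<in> G" and fin: "finite G"
  shows "1 - 2 * \<delta> \<le> t * (\<Sum>k\<in>G. normal_density (of_int k * t) \<sigma> x)"
proof -
  let ?f = "normal_density 0 \<sigma>"
  have \<sigma>_pos: "0 < \<sigma>" and t_pos: "0 < t"
    using \<delta> r by (simp_all add: \<sigma> t)
  have "t = r * (\<delta> * sqrt \<delta>)"
    by (simp add: t \<sigma>)
  also have "\<dots> \<le> r"
    using \<delta> r by (simp add: mult_le_one)
  finally have tr: "t \<le> r" .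
  have "1 - \<delta> \<le> 2 * integral {0..r} ?f"
    using normal_density_half_mass_ge[OF \<sigma>_pos r] \<delta> r by (simp add: \<sigma> power_mult_distrib)
  moreover have "2 * (t * ?f 0) \<le> \<delta>"
    using mult_left_mono[OF normal_density_zero_at_zero_le[OF \<sigma>_pos], of \<delta>] \<delta> by (simp add: t)
  moreover have "2 * (integral {0..r} ?f - t * ?f 0) \<le> t * (\<Sum>k\<in>G. ?f (x - of_int k * t))"
    by (rule riemann_sum_grid_ge[OF antimono_on_normal_density_zero normal_density_nonneg
          normal_density_zero_minus t_pos tr G fin])
  ultimately show ?thesis
    by (simp add: normal_density_shift[of "of_int _ * t"])
qed

lemma gauss_mixture_lower_bound_on_compact:
  fixes A :: "real set"
  assumes A: "compact A" "A \<noteq> {}" and b: "measure lborel A < b" and \<epsilon>: "0 < \<epsilon>"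
  shows "\<exists>g\<in>gauss_mixtures. \<forall>x\<in>A. 1 - \<epsilon> \<le> b * g x"
proof -
  define \<delta> where "\<delta> = min (1 / 4) (\<epsilon> / 2)"
  have \<delta>: "0 < \<delta>" "\<delta> \<le> 1 / 4" "1 - \<epsilon> \<le> 1 - 2 * \<delta>"
    using \<epsilon> by (auto simp: \<delta>_def)
  have "0 < b"
    using b measure_nonneg order_le_less_trans by blast
  then have "emeasure lborel A < ennreal b"
    using A b emeasure_compact_finite[of A] by (simp add: emeasure_eq_ennreal_measure ennreal_lessI)
  then obtain \<rho> where \<rho>: "0 < \<rho>" and W: "emeasure lborel {z. infdist z A \<le> \<rho>} < ennreal b"
    using emeasure_infdist_le_less[OF A] by blast
  define r where "r = \<rho> / 2"
  define \<sigma> where "\<sigma> = r * sqrt \<delta>"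
  define t where "t = \<delta> * \<sigma>"
  have r: "0 < r" and t: "0 < t" "t \<le> r"
    using \<rho> \<delta> by (auto simp: r_def t_def \<sigma>_def mult_le_one)
  define G where "G = {k::int. \<exists>y\<in>A. \<bar>of_int k * t - y\<bar> \<le> r}"
  have "G \<subseteq> {k. of_int k * t \<in> {z. infdist z A \<le> r}}"
    by (auto simp: G_def dist_real_def abs_minus_commute intro: infdist_le2)
  moreover have "bounded {z. infdist z A \<le> r}"
    using A r by (intro compact_imp_bounded compact_infdist_le)
  ultimately have G_fin: "finite G"
    using t by (metis finite_subset finite_int_grid_in_bounded)
  have cells: "{of_int k * t..<of_int k * t + t} \<subseteq> {z. infdist z A \<le> \<rho>}" if k: "k \<in> G" for k
  proof
    fix z assume z: "z \<in> {of_int k * t..<of_int k * t + t}"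
    obtain y where y: "y \<in> A" and ky: "\<bar>of_int k * t - y\<bar> \<le> r"
      using k unfolding G_def by blast
    have "dist z y \<le> \<rho>"
      using ky z t(2) unfolding dist_real_def r_def abs_le_iff atLeastLessThan_iff by linarith
    then show "z \<in> {z. infdist z A \<le> \<rho>}"
      using y by (auto intro: infdist_le2)
  qed
  have "compact {z. infdist z A \<le> \<rho>}"
    using A \<rho> by (intro compact_infdist_le)
  then have "{z. infdist z A \<le> \<rho>} \<in> sets lborel"
    by (simp add: borel_compact)
  from card_grid_cells_le_emeasure[OF t(1) G_fin this cells] W
  have "ennreal (real (card G) * t) < ennreal b"
    by (rule order_le_less_trans)
  then have Nt: "real (card G) * t \<le> b"
    using t by (subst (asm) ennreal_less_iff) auto
  have sum_ge: "1 - 2 * \<delta> \<le> t * (\<Sum>k\<in>G. normal_density (of_int k * t) \<sigma> x)" if "x \<in> A" for x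
    by (rule normal_grid_sum_ge[OF \<delta>(1) _ r \<sigma>_def t_def _ G_fin])
       (use \<delta> that in \<open>auto simp: G_def\<close>)
  obtain x0 where "x0 \<in> A"
    using A by blast
  from sum_ge[OF this] \<delta> have "G \<noteq> {}"
    by auto
  define g where "g x = (\<Sum>k\<in>G. normal_density (of_int k * t) \<sigma> x) / real (card G)" for x
  have "g \<in> gauss_mixtures"
    unfolding g_def[abs_def] using G_fin \<open>G \<noteq> {}\<close> r \<delta>
    by (intro uniform_mixture_in_gauss_mixtures) (simp_all add: \<sigma>_def)
  moreover have "1 - \<epsilon> \<le> b * g x" if "x \<in> A" for x
  proof -
    have "1 - \<epsilon> \<le> t * (\<Sum>k\<in>G. normal_density (of_int k * t) \<sigma> x)"
      using sum_ge[OF that] \<delta> by simp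
    also have "\<dots> = (real (card G) * t) * g x"
      using G_fin \<open>G \<noteq> {}\<close> by (simp add: g_def)
    also have "\<dots> \<le> b * g x"
      using Nt by (intro mult_right_mono) (simp_all add: g_def sum_nonneg)
    finally show ?thesis .
  qed
  ultimately show ?thesis
    by blast
qed

lemma INF_KL_gauss_mixtures_uniform:
  fixes A :: "real set"
  assumes A: "compact A" and pos: "0 < measure lborel A"
  defines "f \<equiv> \<lambda>x. indicator A x / measure lborel A"
  shows "(INF g\<in>gauss_mixtures. KL f g) = 0"
proof (rule antisym)
  let ?a = "measure lborel A"
  have f: "is_density f"
    unfolding f_def using A pos by (rule is_density_uniform)
  show "0 \<le> (INF g\<in>gauss_mixtures. KL f g)"
    using f by (simp add: INF_greatest KL_nonneg gauss_mixtures_positive_density)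
  show "(INF g\<in>gauss_mixtures. KL f g) \<le> 0"
  proof (rule ereal_le_epsilon2)
    fix \<epsilon> :: real assume \<epsilon>: "0 < \<epsilon>"
    define \<delta> where "\<delta> = min (1 / 2) (\<epsilon> / 4)"
    have \<delta>: "0 < \<delta>" "\<delta> \<le> 1 / 2" "4 * \<delta> \<le> \<epsilon>"
      using \<epsilon> by (auto simp: \<delta>_def)
    have "?a < ?a * (1 + \<delta>)"
      using pos \<delta> by simp
    with A pos obtain g where g: "g \<in> gauss_mixtures"
      and low: "\<And>x. x \<in> A \<Longrightarrow> 1 - \<delta> \<le> ?a * (1 + \<delta>) * g x"
      using gauss_mixture_lower_bound_on_compact[of A "?a * (1 + \<delta>)" \<delta>] \<delta> by fastforce
    have "ln (f x / g x) \<le> \<epsilon>" if "x \<in> A" for x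
    proof -
      have gx: "0 < g x"
        using gauss_mixtures_positive_density(2)[OF g] .
      have "f x / g x \<le> (1 + \<delta>) / (1 - \<delta>)"
        using low[OF that] gx pos \<delta> that by (simp add: f_def field_simps)
      then have "ln (f x / g x) \<le> (1 + \<delta>) / (1 - \<delta>) - 1"
        using gx pos that \<delta> by (intro order_trans[OF ln_mono ln_le_minus_one]) (auto simp: f_def)
      also have "\<dots> \<le> 4 * \<delta>"
        using \<delta> by (simp add: field_simps)
      finally show ?thesis
        using \<delta> by simp
    qed
    then have "KL f g \<le> ereal \<epsilon>"
      using f \<epsilon> gauss_mixtures_positive_density(2)[OF g]
      by (intro KL_le_of_ln_ratio_le) (auto simp: f_def indicator_def split: if_splits)
    then show "(INF g\<in>gauss_mixtures. KL f g) \<le> 0 + ereal \<epsilon>"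
      using g by (simp add: INF_lower2)
  qed
qed

section \<open>Densities outside \<open>F_CSSA\<close>\<close>

lemma fssa_conds_interior_supp_nonempty:
  assumes "fssa_conds f r C A"
  shows "interior (supp f) \<noteq> {}"
proof -
  have "\<forall>m\<ge>1. supp f = (\<Union>i\<le>m. A m i) \<and> disjoint_family_on (A m) {..m}
      \<and> (\<exists>h>0. adjacent_cubes h m (A m))"
    using assms unfolding fssa_conds_def by (elim conjE)
  then obtain h where h: "0 < h" and supp: "supp f = (\<Union>i\<le>1. A 1 i)" and adj: "adjacent_cubes h 1 (A 1)"
    by blast
  have "part_cube h (A 1 1)"
    using adj by (simp add: adjacent_cubes_def)
  then obtain u where "{u<..<u + h} \<subseteq> A 1 1"
    unfolding part_cube_def by (metis greaterThanLessThan_subseteq_atLeastAtMost_iff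
        greaterThanLessThan_subseteq_atLeastLessThan_iff greaterThanLessThan_subseteq_greaterThanAtMost_iff order_refl)
  also have "\<dots> \<subseteq> supp f"
    using supp by auto
  finally have "{u<..<u + h} \<subseteq> interior (supp f)"
    by (simp add: interior_maximal)
  moreover have "u + h / 2 \<in> {u<..<u + h}"
    using h by simp
  ultimately show ?thesis
    by blast
qed

lemma Fmeas_le_one:
  assumes "is_density f"
  shows "Fmeas f B \<le> 1"
proof -
  have "Fmeas f B \<le> (\<integral>\<^sup>+ x. ennreal (f x) \<partial>lebesgue)"
    unfolding Fmeas_def by (intro nn_integral_mono) (auto simp: indicator_def)
  then show ?thesis
    using assms by (simp add: is_density_def)
qed

lemma Fmeas_supp:
  assumes "is_density f"
  shows "Fmeas f (supp f) = 1"
proof -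
  have "Fmeas f (supp f) = (\<integral>\<^sup>+ x. ennreal (f x) \<partial>lebesgue)"
    unfolding Fmeas_def supp_def by (intro nn_integral_cong) (auto simp: indicator_def not_less ennreal_neg)
  then show ?thesis
    using assms by (simp add: is_density_def)
qed

lemma Fmeas_UN_le:
  assumes "is_density f" and Y: "\<And>l. Y l \<in> sets lebesgue"
  shows "Fmeas f (\<Union>l. Y l) \<le> (\<Sum>l. Fmeas f (Y l))"
proof -
  let ?F = "density lebesgue (\<lambda>x. ennreal (f x))"
  have f: "f \<in> borel_measurable lebesgue"
    using assms by (simp add: is_density_def)
  have Fmeas: "Fmeas f B = emeasure ?F B" if "B \<in> sets lebesgue" for B
    using f that by (simp add: Fmeas_def emeasure_density mult.commute)
  have "emeasure ?F (\<Union>l. Y l) \<le> (\<Sum>l. emeasure ?F (Y l))"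
    using Y by (intro emeasure_subadditive_countably) auto
  then show ?thesis
    using Y by (simp add: Fmeas sets.countable_UN)
qed

lemma interior_supp_empty_not_in_F_CSSA:
  assumes "interior (supp f) = {}"
  shows "f \<notin> F_CSSA"
proof
  assume "f \<in> F_CSSA"
  then have dens: "is_density f"
    by (simp add: F_CSSA_def)
  obtain Y :: "nat \<Rightarrow> real set" and r C A
    where Y: "\<forall>l\<ge>1. Y l \<in> sets lebesgue" and cover: "supp f = (\<Union>l\<in>{1..}. Y l)"
      and pieces: "\<forall>l\<ge>1. enn2real (Fmeas f (Y l)) > 0 \<longrightarrow>
          is_density (\<lambda>x. f x * indicator (Y l) x / enn2real (Fmeas f (Y l)))
        \<and> fssa_conds (\<lambda>x. f x * indicator (Y l) x / enn2real (Fmeas f (Y l))) (r l) (C l) (A l)"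
    using \<open>f \<in> F_CSSA\<close> unfolding F_CSSA_def Let_def mem_Collect_eq
    by (elim conjE exE) (rule that, assumption+)
  have "\<exists>l\<ge>1. Fmeas f (Y l) \<noteq> 0"
  proof (rule ccontr)
    assume "\<not> ?thesis"
    moreover have "{1..} = range Suc"
      by (auto simp: image_iff) (metis Suc_pred' less_eq_Suc_le)
    then have "supp f = (\<Union>l. Y (Suc l))"
      using cover by (simp add: image_image)
    ultimately have "Fmeas f (supp f) \<le> 0"
      using Fmeas_UN_le[OF dens, of "\<lambda>l. Y (Suc l)"] Y by simp
    then show False
      using Fmeas_supp[OF dens] by simp
  qed
  then obtain l where l: "1 \<le> l" "Fmeas f (Y l) \<noteq> 0"
    by blast
  moreover have "Fmeas f (Y l) < \<top>"
    using order_le_less_trans[OF Fmeas_le_one[OF dens] ennreal_one_less_top] .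
  ultimately have p_pos: "0 < enn2real (Fmeas f (Y l))"
    by (simp add: enn2real_positive_iff zero_less_iff_neq_zero)
  then have "fssa_conds (\<lambda>x. f x * indicator (Y l) x / enn2real (Fmeas f (Y l))) (r l) (C l) (A l)"
    using pieces l(1) by blast
  then have "interior (supp (\<lambda>x. f x * indicator (Y l) x / enn2real (Fmeas f (Y l)))) \<noteq> {}"
    by (rule fssa_conds_interior_supp_nonempty)
  moreover have "supp (\<lambda>x. f x * indicator (Y l) x / enn2real (Fmeas f (Y l))) \<subseteq> supp f"
    using p_pos by (auto simp: supp_def indicator_def zero_less_divide_iff)
  ultimately show False
    using assms interior_mono by (metis subset_empty)
qed

theorem mainTheorem17:
  fixes A :: "real set" and c :: real and fd :: "real \<Rightarrow> real"
  assumes "fat_cantor A"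
    and "c = 1 / measure lebesgue A"
    and "fd = (\<lambda>x. c * indicator A x)"
  shows "is_density fd
    \<and> (\<integral>\<^sup>+ x. ennreal (x^2 * fd x) \<partial>lebesgue) < \<infinity>
    \<and> (INF g\<in>gauss_mixtures. KL fd g) = 0
    \<and> fd \<notin> F_Ent
    \<and> fd \<notin> F_CSSA"
proof -
  note A = fat_cantorD[OF assms(1)]
  have fd: "fd = (\<lambda>x. indicator A x / measure lborel A)"
    using assms(2,3) A(5) by auto
  have dens: "is_density fd"
    unfolding fd using A(1,4) by (rule is_density_uniform)
  have supp: "supp fd = A"
    using A(4) by (auto simp: supp_def fd indicator_def)
  have "(2::real) \<notin> A"
    using A(2) by auto
  then have "fd 2 = 0"
    by (simp add: fd)
  then have "fd \<notin> F_Ent"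
    unfolding F_Ent_def by (metis (mono_tags, lifting) less_irrefl mem_Collect_eq)
  moreover have "(\<integral>\<^sup>+ x. ennreal (x^2 * fd x) \<partial>lebesgue) < \<infinity>"
    using A(2)
    by (intro second_moment_finite_if_bounded_support[OF dens, of 1]) (auto simp: fd indicator_def subset_iff)
  moreover have "fd \<notin> F_CSSA"
    using A(3) supp by (intro interior_supp_empty_not_in_F_CSSA) simp
  ultimately show ?thesis
    using dens INF_KL_gauss_mixtures_uniform[OF A(1,4)] by (simp add: fd)
qed

end
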